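(* Let $\chi_1,\dots,\chi_n$ be Bernoulli random variables such that $\sum_{i=1}^n\Pr(\chi_i=1)=1$ and the events $\{\chi_i=1\}$ are mutually exclusive. Let $B_1,\dots,B_n$ be independent Bernoulli random variables with $\Pr(B_i=1)=\Pr(\chi_i=1)$. Let $P$ be a Poisson random variable with parameter $1$ independent of the $\chi_i$. Then for all nonnegative numbers $\alpha_1,\dots,\alpha_n$, $$\sum_{i=1}^n\alpha_i\chi_i\le_{cx}\sum_{i=1}^n\alpha_iB_i\le_{cx}P\sum_{i=1}^n\alpha_i\chi_i .$$
   Context: $X\le_{cx}Y$ means $\mathbb{E}\varphi(X)\le\mathbb{E}\varphi(Y)$ for every convex $\varphi:\mathbb{R}\to\mathbb{R}$ for which both expectations exist. *)

theory Defs
  imports "HOL-Probability.Probability"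
begin

text \<open>Convex order: X (on probability space M) is below Y (on probability space N)
  in the convex order if E phi(X) <= E phi(Y) for every convex phi : R -> R
  for which both expectations exist (read as: both phi o X and phi o Y integrable).\<close>
definition cx_le :: "'a measure \<Rightarrow> ('a \<Rightarrow> real) \<Rightarrow> 'b measure \<Rightarrow> ('b \<Rightarrow> real) \<Rightarrow> bool" where
  "cx_le M X N Y \<longleftrightarrow>
     (\<forall>\<phi> :: real \<Rightarrow> real. convex_on UNIV \<phi> \<longrightarrow>
        integrable M (\<lambda>x. \<phi> (X x)) \<longrightarrow> integrable N (\<lambda>y. \<phi> (Y y)) \<longrightarrow>
        (\<integral>x. \<phi> (X x) \<partial>M) \<le> (\<integral>y. \<phi> (Y y) \<partial>N))"

end

theory Submission
  imports Defs
begin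

text \<open>
  Left comparison: at most one \<open>chi i\<close> equals \<open>1\<close>, so \<open>\<phi> (\<Sum>i. \<alpha> i * chi i)\<close> is the affine
  expression \<open>\<phi> 0 + \<Sum>i. (\<phi> (\<alpha> i) - \<phi> 0) * chi i\<close>, while superadditivity of \<open>\<phi> - \<phi> 0\<close> on
  \<open>[0, \<infinity>)\<close> bounds \<open>\<phi> (\<Sum>i. \<alpha> i * B i)\<close> from below by the same expression in the \<open>B i\<close>.
  Both affine expressions have the same mean.

  Right comparison: subtracting from \<open>\<phi>\<close> the affine function through \<open>(-1, \<phi> (-1))\<close> and
  \<open>(0, \<phi> 0)\<close> changes neither side (the means agree) and makes \<open>\<phi>\<close> nonnegative on \<open>[0, \<infinity>)\<close>.
  By induction on the number of summands, \<open>E \<phi> (\<Sum>i\<in>I. \<alpha> i * B i)\<close> is at most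
  \<open>E \<phi> (N * \<alpha> J)\<close>, where \<open>N\<close> is Poisson with rate \<open>L = \<Sum>i\<in>I. p i\<close> and \<open>J\<close> is an independent
  index with law \<open>p / L\<close>. A new summand \<open>a * B\<close> with \<open>B\<close> Bernoulli(\<open>q\<close>) is absorbed by comparing
  \<open>B\<close> with a Poisson(\<open>q\<close>) variable, splitting \<open>\<phi> (t x + m a)\<close> by Jensen's inequality, and
  superposing the Poisson variables of rates \<open>L\<close> and \<open>q\<close>. For \<open>L = 1\<close> the bound is
  \<open>E \<phi> (P * \<Sum>i. \<alpha> i * chi i)\<close>.
\<close>

section \<open>Poisson weights\<close>

definition poisson_weight :: "real \<Rightarrow> nat \<Rightarrow> real" where
  "poisson_weight q m = exp (-q) * q ^ m / fact m"

text \<open>This is \<open>poisson_weight l t / l\<close> for \<open>t > 0\<close>, written without the division so that it stays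
  informative at rate \<open>0\<close>.\<close>
definition poisson_rate_weight :: "real \<Rightarrow> nat \<Rightarrow> real" where
  "poisson_rate_weight l t = (if t = 0 then 0 else exp (-l) * l ^ (t - 1) / fact t)"

lemma poisson_weight_nonneg: "q \<ge> 0 \<Longrightarrow> poisson_weight q m \<ge> 0"
  by (simp add: poisson_weight_def)

lemma poisson_rate_weight_nonneg: "l \<ge> 0 \<Longrightarrow> poisson_rate_weight l t \<ge> 0"
  by (simp add: poisson_rate_weight_def)

lemma poisson_weight_eq_rate_weight:
  "poisson_weight l m = (if m = 0 then exp (-l) else 0) + l * poisson_rate_weight l m"
  by (cases m) (simp_all add: poisson_weight_def poisson_rate_weight_def)

lemma sums_poisson_weight: "(\<lambda>m. poisson_weight q m) sums 1"
proof -
  have "(\<lambda>m. exp (-q) * (q ^ m /\<^sub>R fact m)) sums (exp (-q) * exp q)"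
    by (rule sums_mult[OF exp_converges])
  then show ?thesis by (simp add: poisson_weight_def mult_exp_exp field_simps)
qed

lemma sums_poisson_weight_mean: "(\<lambda>m. poisson_weight q m * real m) sums q"
proof -
  have "(\<lambda>m. q * poisson_weight q m) sums (q * 1)" by (rule sums_mult[OF sums_poisson_weight])
  moreover have "(\<lambda>m. poisson_weight q (Suc m) * real (Suc m)) = (\<lambda>m. q * poisson_weight q m)"
    by (rule ext) (simp add: poisson_weight_def field_simps del: of_nat_Suc)
  ultimately have "(\<lambda>m. poisson_weight q (Suc m) * real (Suc m)) sums q" by simp
  then show ?thesis by (subst (asm) sums_Suc_iff) simp
qed

text \<open>\<open>ennreal (exp (-l) * \<psi> 0) + l * poisson_tail \<psi> l x\<close> is \<open>E \<psi> (N * x)\<close> for \<open>N\<close> Poisson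
  with rate \<open>l\<close> (lemma suminf_poisson_weight_eq). Hence a bound
  \<open>exp (-L) * \<psi> 0 + (\<Sum>j. q j * poisson_tail \<psi> L (\<alpha> j))\<close> with \<open>L = (\<Sum>j. q j)\<close> is
  \<open>E \<psi> (N * \<alpha> J)\<close> for an index \<open>J\<close> of law \<open>q / L\<close> independent of \<open>N\<close>.\<close>

definition poisson_tail :: "(real \<Rightarrow> real) \<Rightarrow> real \<Rightarrow> real \<Rightarrow> ennreal" where
  "poisson_tail \<psi> l x = (\<Sum>t. ennreal (poisson_rate_weight l t * \<psi> (real t * x)))"

lemma suminf_poisson_weight_eq:
  assumes l: "l \<ge> 0" and nn: "\<And>x. x \<ge> 0 \<Longrightarrow> \<psi> x \<ge> 0" and x: "x \<ge> 0"
  shows "(\<Sum>m. ennreal (poisson_weight l m * \<psi> (real m * x)))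
    = ennreal (exp (-l) * \<psi> 0) + ennreal l * poisson_tail \<psi> l x"
proof -
  have "(\<Sum>m. ennreal (poisson_weight l m * \<psi> (real m * x)))
      = (\<Sum>m. ennreal (if m = 0 then exp (-l) * \<psi> 0 else 0)
             + ennreal l * ennreal (poisson_rate_weight l m * \<psi> (real m * x)))"
  proof (intro suminf_cong)
    fix m
    have "poisson_weight l m * \<psi> (real m * x)
        = (if m = 0 then exp (-l) * \<psi> 0 else 0) + l * (poisson_rate_weight l m * \<psi> (real m * x))"
      by (cases m) (simp_all add: poisson_weight_eq_rate_weight algebra_simps)
    moreover have "0 \<le> poisson_rate_weight l m * \<psi> (real m * x)"
      using l nn x by (simp add: poisson_rate_weight_nonneg)
    ultimately show "ennreal (poisson_weight l m * \<psi> (real m * x))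
        = ennreal (if m = 0 then exp (-l) * \<psi> 0 else 0)
          + ennreal l * ennreal (poisson_rate_weight l m * \<psi> (real m * x))"
      using l nn[of 0] by (simp add: ennreal_mult')
  qed
  also have "\<dots> = (\<Sum>m. ennreal (if m = 0 then exp (-l) * \<psi> 0 else 0)) + ennreal l * poisson_tail \<psi> l x"
    unfolding poisson_tail_def by (subst suminf_add[symmetric]) auto
  also have "(\<Sum>m. ennreal (if m = 0 then exp (-l) * \<psi> 0 else 0)) = ennreal (exp (-l) * \<psi> 0)"
    by (subst suminf_finite[of "{0}"]) auto
  finally show ?thesis .
qed

definition superposition_weight :: "real \<Rightarrow> real \<Rightarrow> nat \<Rightarrow> real" where
  "superposition_weight l q s
    = (\<Sum>t\<le>s. poisson_rate_weight l t * poisson_weight q (s - t) * real (s - t) / real s)"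

lemma superposition_weight_nonneg: "l \<ge> 0 \<Longrightarrow> q \<ge> 0 \<Longrightarrow> superposition_weight l q s \<ge> 0"
  unfolding superposition_weight_def
  by (intro sum_nonneg) (simp add: poisson_rate_weight_nonneg poisson_weight_nonneg)

text \<open>The next two identities are the superposition of independent Poisson variables of rates
  \<open>l\<close> and \<open>q\<close>, split according to which of the two summands a point of the sum comes from.\<close>

lemma poisson_rate_weight_superposition:
  "(\<Sum>t\<le>s. poisson_rate_weight l t * poisson_weight q (s - t) * real t / real s)
    = poisson_rate_weight (l + q) s"
proof (cases s)
  case 0 then show ?thesis by (simp add: poisson_rate_weight_def)
next
  case (Suc r)
  have "(\<Sum>t\<le>s. poisson_rate_weight l t * poisson_weight q (s - t) * real t / real s)
      = (\<Sum>k\<le>r. poisson_rate_weight l (Suc k) * poisson_weight q (s - Suc k) * real (Suc k) / real s)"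
    unfolding Suc by (subst sum.atMost_Suc_shift) (simp add: poisson_rate_weight_def)
  also have "\<dots> = (\<Sum>k\<le>r. exp (-(l+q)) / fact (Suc r) * (of_nat (r choose k) * l ^ k * q ^ (r - k)))"
  proof (intro sum.cong refl)
    fix k assume "k \<in> {..r}"
    then have k: "k \<le> r" by simp
    have "exp (-l) * l ^ k / fact (Suc k) * (exp (-q) * q ^ (r - k) / fact (r - k)) * real (Suc k) / real (Suc r)
      = exp (-l) * exp (-q) / fact (Suc r) * (fact r / (fact k * fact (r - k)) * l ^ k * q ^ (r - k))"
      by (simp add: divide_simps del: of_nat_Suc)
    moreover have "real (r choose k) = fact r / (fact k * fact (r - k))"
      using binomial_fact[OF k, where 'a=real] by simp
    ultimately show "poisson_rate_weight l (Suc k) * poisson_weight q (s - Suc k) * real (Suc k) / real s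
       = exp (-(l+q)) / fact (Suc r) * (of_nat (r choose k) * l ^ k * q ^ (r - k))"
      using Suc by (simp add: poisson_rate_weight_def poisson_weight_def exp_add[symmetric])
  qed
  also have "\<dots> = exp (-(l+q)) / fact (Suc r) * (l + q) ^ r"
    by (simp add: binomial_ring sum_distrib_left)
  also have "\<dots> = poisson_rate_weight (l + q) s" using Suc by (simp add: poisson_rate_weight_def)
  finally show ?thesis .
qed

lemma poisson_rate_weight_superposition':
  "exp (-l) * poisson_weight q s + l * superposition_weight l q s
     = (if s = 0 then exp (-(l + q)) else 0) + q * poisson_rate_weight (l + q) s"
proof (cases s)
  case 0 then show ?thesis
    by (simp add: superposition_weight_def poisson_weight_def poisson_rate_weight_def exp_add[symmetric])
next
  case (Suc r)
  define h where "h t = exp (-(l+q)) * l ^ t * q ^ (s - t) * real (s - t) / (fact t * fact (s - t) * real s)" for t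
  have "exp (-l) * poisson_weight q s + l * superposition_weight l q s
      = (\<Sum>t\<le>s. (if t = 0 then exp (-l) * poisson_weight q s else 0)
                  + l * (poisson_rate_weight l t * poisson_weight q (s - t) * real (s - t) / real s))"
    by (simp add: superposition_weight_def sum.distrib sum_distrib_left)
  also have "\<dots> = (\<Sum>t\<le>s. h t)"
  proof (intro sum.cong refl)
    fix t
    have "exp (-l - q) = exp (-l) * exp (-q)" by (simp add: exp_diff exp_minus field_simps)
    moreover have "real s > 0" using Suc by simp
    ultimately show "(if t = 0 then exp (-l) * poisson_weight q s else 0)
        + l * (poisson_rate_weight l t * poisson_weight q (s - t) * real (s - t) / real s) = h t"
      by (cases t) (simp_all add: h_def poisson_rate_weight_def poisson_weight_def field_simps)
  qed
  also have "\<dots> = (\<Sum>t\<le>r. h t)" by (simp add: h_def Suc)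
  also have "\<dots> = (\<Sum>t\<le>r. q * (exp (-(l+q)) / fact (Suc r)) * (of_nat (r choose t) * l ^ t * q ^ (r - t)))"
  proof (intro sum.cong refl)
    fix t assume "t \<in> {..r}"
    then have t: "t \<le> r" by simp
    have "exp (-l) * exp (-q) * l ^ t * q ^ (Suc (r - t)) * real (Suc (r - t)) / (fact t * fact (Suc (r - t)) * real (Suc r))
      = q * (exp (-l) * exp (-q) / fact (Suc r)) * (fact r / (fact t * fact (r - t)) * l ^ t * q ^ (r - t))"
      by (simp add: divide_simps del: of_nat_Suc)
    moreover have "real (r choose t) = fact r / (fact t * fact (r - t))"
      using binomial_fact[OF t, where 'a=real] by simp
    moreover have "Suc r - t = Suc (r - t)" using t by simp
    ultimately show "h t = q * (exp (-(l+q)) / fact (Suc r)) * (of_nat (r choose t) * l ^ t * q ^ (r - t))"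
      by (simp add: h_def Suc exp_add[symmetric])
  qed
  also have "\<dots> = q * (exp (-(l+q)) / fact (Suc r)) * (l + q) ^ r"
    by (simp add: binomial_ring sum_distrib_left)
  finally show ?thesis using Suc by (simp add: poisson_rate_weight_def)
qed

section \<open>Convex functions on the half-line\<close>

lemma convex_on_real_combination:
  fixes \<psi> :: "real \<Rightarrow> real"
  assumes "convex_on S \<psi>" and "x \<in> S" "y \<in> S" "u \<ge> 0" "v \<ge> 0" "u + v = 1"
  shows "\<psi> (u * x + v * y) \<le> u * \<psi> x + v * \<psi> y"
  using assms unfolding convex_on_def by auto

lemma convex_on_extrapolate:
  fixes \<psi> :: "real \<Rightarrow> real"
  assumes conv: "convex_on {0..} \<psi>" and s: "s \<ge> 0" and a: "a \<ge> 0"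
  shows "\<psi> s + real m * (\<psi> (s + a) - \<psi> s) \<le> \<psi> (s + real m * a)"
proof (cases "m = 0")
  case False
  then have m: "real m \<ge> 1" by simp
  have "(1 - 1 / real m) * s + (1 / real m) * (s + real m * a) = s + a"
    using m by (simp add: field_simps)
  moreover have "\<psi> ((1 - 1 / real m) * s + (1 / real m) * (s + real m * a))
      \<le> (1 - 1 / real m) * \<psi> s + (1 / real m) * \<psi> (s + real m * a)"
    by (rule convex_on_real_combination[OF conv]) (use s a m in auto)
  ultimately have "real m * \<psi> (s + a) \<le> real m * ((1 - 1 / real m) * \<psi> s + (1 / real m) * \<psi> (s + real m * a))"
    using m by simp
  also have "\<dots> = (real m - 1) * \<psi> s + \<psi> (s + real m * a)" using m by (simp add: field_simps)
  finally show ?thesis by (simp add: algebra_simps)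
qed simp

lemma convex_on_split_nat:
  fixes \<psi> :: "real \<Rightarrow> real"
  assumes conv: "convex_on {0..} \<psi>" and x: "x \<ge> 0" and y: "y \<ge> 0" and tm: "t + m > 0"
  shows "\<psi> (real t * x + real m * y)
    \<le> real t / real (t + m) * \<psi> (real (t + m) * x) + real m / real (t + m) * \<psi> (real (t + m) * y)"
proof -
  have tp: "real (t + m) > 0" using tm by (simp only: of_nat_0_less_iff)
  have "real t / real (t + m) * (real (t + m) * x) + real m / real (t + m) * (real (t + m) * y)
      = real t * x + real m * y"
    using tp by simp
  moreover have "real t / real (t + m) + real m / real (t + m) = 1"
    using tp by (simp add: add_divide_distrib[symmetric] del: of_nat_add)
  ultimately show ?thesis
    using convex_on_real_combination[OF conv, of "real (t + m) * x" "real (t + m) * y"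
        "real t / real (t + m)" "real m / real (t + m)"] x y
    by simp
qed

lemma convex_on_superadditive:
  fixes \<phi> :: "real \<Rightarrow> real"
  assumes conv: "convex_on {0..} \<phi>" and u: "u \<ge> 0" and v: "v \<ge> 0"
  shows "\<phi> u + \<phi> v \<le> \<phi> 0 + \<phi> (u + v)"
proof (cases "u + v = 0")
  case True
  then have "u = 0" "v = 0" using u v by auto
  then show ?thesis by simp
next
  case False
  then have s: "u + v > 0" using u v by simp
  have c: "v / (u + v) + u / (u + v) = 1" using s by (simp add: add_divide_distrib[symmetric] add.commute)
  have "\<phi> (v / (u + v) * 0 + u / (u + v) * (u + v)) \<le> v / (u + v) * \<phi> 0 + u / (u + v) * \<phi> (u + v)"
    by (rule convex_on_real_combination[OF conv]) (use u v s c in auto)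
  then have 1: "\<phi> u \<le> v / (u + v) * \<phi> 0 + u / (u + v) * \<phi> (u + v)" using s by simp
  have "\<phi> (u / (u + v) * 0 + v / (u + v) * (u + v)) \<le> u / (u + v) * \<phi> 0 + v / (u + v) * \<phi> (u + v)"
    by (rule convex_on_real_combination[OF conv]) (use u v s c in \<open>auto simp: add.commute\<close>)
  then have 2: "\<phi> v \<le> u / (u + v) * \<phi> 0 + v / (u + v) * \<phi> (u + v)" using s by simp
  have "v / (u + v) * \<phi> 0 + u / (u + v) * \<phi> (u + v) + (u / (u + v) * \<phi> 0 + v / (u + v) * \<phi> (u + v))
      = (v / (u + v) + u / (u + v)) * \<phi> 0 + (v / (u + v) + u / (u + v)) * \<phi> (u + v)"
    by (simp add: algebra_simps)
  also have "\<dots> = \<phi> 0 + \<phi> (u + v)" using c by simp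
  finally show ?thesis using 1 2 by linarith
qed

lemma convex_on_superadditive_indicator_sum:
  fixes \<phi> :: "real \<Rightarrow> real" and b \<alpha> :: "'i \<Rightarrow> real"
  assumes conv: "convex_on {0..} \<phi>" and "finite I"
    and "\<And>i. i \<in> I \<Longrightarrow> b i \<in> {0, 1}" and "\<And>i. i \<in> I \<Longrightarrow> \<alpha> i \<ge> 0"
  shows "\<phi> 0 + (\<Sum>i\<in>I. (\<phi> (\<alpha> i) - \<phi> 0) * b i) \<le> \<phi> (\<Sum>i\<in>I. \<alpha> i * b i)"
  using assms(2-)
proof (induction I rule: finite_induct)
  case (insert k F)
  have "(\<Sum>i\<in>F. \<alpha> i * b i) \<ge> 0"
  proof (rule sum_nonneg)
    fix i assume "i \<in> F"
    then have "b i \<in> {0, 1}" "\<alpha> i \<ge> 0" using insert.prems by auto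
    then show "0 \<le> \<alpha> i * b i" by auto
  qed
  note superadd = convex_on_superadditive[OF conv _ this, of "\<alpha> k"]
  have "b k = 0 \<or> b k = 1" "\<alpha> k \<ge> 0" using insert.prems by auto
  then show ?case
  proof (elim disjE)
    assume "b k = 1"
    with insert superadd \<open>\<alpha> k \<ge> 0\<close> show ?case by (simp add: algebra_simps)
  qed (use insert in simp)
qed simp

lemma convex_on_shift:
  fixes \<psi> :: "real \<Rightarrow> real"
  assumes "convex_on UNIV \<psi>"
  shows "convex_on UNIV (\<lambda>x. \<psi> (x + a))"
proof -
  have "\<psi> (u * x + v * y + a) \<le> u * \<psi> (x + a) + v * \<psi> (y + a)"
    if "u \<ge> 0" "v \<ge> 0" "u + v = 1" for u v x y :: real
  proof -
    have "u * x + v * y + a = u * x + v * y + (u + v) * a" using that(3) by simp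
    then have "u * x + v * y + a = u * (x + a) + v * (y + a)"
      by (simp add: algebra_simps)
    then show ?thesis using convex_on_real_combination[OF assms _ _ that] by simp
  qed
  then show ?thesis unfolding convex_on_def by (intro conjI ballI allI impI) auto
qed

lemma convex_on_borel_measurable:
  fixes \<psi> :: "real \<Rightarrow> real"
  assumes "convex_on UNIV \<psi>"
  shows "\<psi> \<in> borel_measurable borel"
  by (rule borel_measurable_continuous_onI, rule convex_on_continuous) (use assms in auto)

lemma convex_on_minus_affine:
  fixes \<phi> :: "real \<Rightarrow> real"
  assumes "convex_on UNIV \<phi>"
  shows "convex_on UNIV (\<lambda>x. \<phi> x - (a + c * x))"
proof (rule convex_on_diff[OF assms])
  show "concave_on UNIV (\<lambda>x. a + c * x)"
    unfolding concave_on_iff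
  proof (intro conjI ballI allI impI)
    fix x y u v :: real assume "u + v = 1"
    then have "a + c * (u * x + v * y) = (u + v) * a + c * (u * x + v * y)" by simp
    then show "u * (a + c * x) + v * (a + c * y) \<le> a + c * (u *\<^sub>R x + v *\<^sub>R y)"
      by (simp add: algebra_simps)
  qed auto
qed

lemma convex_on_secant_le:
  fixes \<phi> :: "real \<Rightarrow> real"
  assumes "convex_on UNIV \<phi>" and "x \<ge> 0"
  shows "\<phi> 0 + (\<phi> 0 - \<phi> (-1)) * x \<le> \<phi> x"
proof (cases "x = 0")
  case False
  then have "x > 0" using assms(2) by simp
  then show ?thesis using convex_on_slope_le[OF assms(1), of "-1" x 0]
    by (simp add: field_simps)
qed simp

section \<open>Absorbing a Bernoulli summand into a Poisson mixture\<close>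

lemma suminf_ennreal_antidiagonal:
  fixes F :: "nat \<Rightarrow> nat \<Rightarrow> ennreal"
  shows "(\<Sum>t. \<Sum>m. F t m) = (\<Sum>s. \<Sum>t\<le>s. F t (s - t))"
proof -
  have "(\<Sum>t. \<Sum>m. F t m) = (\<integral>\<^sup>+ t. \<integral>\<^sup>+ m. (\<lambda>(t,m). F t m) (t, m) \<partial>count_space UNIV \<partial>count_space UNIV)"
    by (simp add: nn_integral_count_space_nat)
  also have "\<dots> = (\<integral>\<^sup>+ x. (\<lambda>(t,m). F t m) x \<partial>count_space UNIV)"
    by (rule nn_integral_fst_count_space)
  also have "\<dots> = (\<integral>\<^sup>+ x. (\<lambda>(s,t). F t (s - t)) ((\<lambda>(t,m). (t+m, t)) x) \<partial>count_space UNIV)"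
    by (intro nn_integral_cong) auto
  also have "\<dots> = (\<integral>\<^sup>+ x. (\<lambda>(s,t). F t (s - t)) x \<partial>count_space {(s,t). t \<le> s})"
  proof (rule nn_integral_bij_count_space)
    show "bij_betw (\<lambda>(t::nat, m::nat). (t + m, t)) UNIV {(s, t). t \<le> s}"
      unfolding bij_betw_def inj_on_def
      by (auto simp: image_def le_iff_add)
  qed
  also have "\<dots> = (\<integral>\<^sup>+ x. (\<lambda>(s,t). if t \<le> s then F t (s - t) else 0) x \<partial>count_space UNIV)"
    by (subst nn_integral_count_space_indicator) (auto intro!: nn_integral_cong split: split_indicator)
  also have "\<dots> = (\<integral>\<^sup>+ s. \<integral>\<^sup>+ t. (\<lambda>(s,t). if t \<le> s then F t (s - t) else 0) (s, t) \<partial>count_space UNIV \<partial>count_space UNIV)"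
    by (rule nn_integral_fst_count_space[symmetric])
  also have "\<dots> = (\<Sum>s. \<Sum>t. if t \<le> s then F t (s - t) else 0)"
    by (simp add: nn_integral_count_space_nat)
  also have "\<dots> = (\<Sum>s. \<Sum>t\<le>s. F t (s - t))"
    by (intro suminf_cong) (subst suminf_finite[of "{..s}" for s], auto)
  finally show ?thesis .
qed

lemma ennreal_scaled_convex_combination:
  assumes "0 \<le> q" "q \<le> 1" "c \<ge> 0" "A \<ge> 0" "B \<ge> 0"
  shows "ennreal (1 - q) * ennreal (c * A) + ennreal q * ennreal (c * B)
    = ennreal c * ennreal ((1 - q) * A + q * B)"
proof -
  have "ennreal (1 - q) * ennreal (c * A) + ennreal q * ennreal (c * B)
      = ennreal ((1 - q) * (c * A) + q * (c * B))"
    using assms by (simp add: ennreal_mult[symmetric] ennreal_plus[symmetric] del: ennreal_plus)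
  also have "\<dots> = ennreal c * ennreal ((1 - q) * A + q * B)"
    using assms by (simp add: algebra_simps flip: ennreal_mult')
  finally show ?thesis .
qed

text \<open>The increment \<open>d = \<psi> (s + a) - \<psi> s\<close> is split into its positive and negative parts so that
  every series below has nonnegative terms.\<close>

lemma convex_bernoulli_le_poisson:
  assumes conv: "convex_on {0..} \<psi>" and nn: "\<And>x. x \<ge> 0 \<Longrightarrow> \<psi> x \<ge> 0"
    and s: "s \<ge> 0" and a: "a \<ge> 0" and q: "0 \<le> q" "q \<le> 1"
  shows "ennreal ((1 - q) * \<psi> s + q * \<psi> (s + a))
    \<le> (\<Sum>m. ennreal (poisson_weight q m * \<psi> (s + real m * a)))"
proof -
  define \<pi> where "\<pi> = poisson_weight q"
  define dp where "dp = max 0 (\<psi> (s + a) - \<psi> s)"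
  define dm where "dm = max 0 (\<psi> s - \<psi> (s + a))"
  have dpm: "dp \<ge> 0" "dm \<ge> 0" "\<psi> (s + a) - \<psi> s = dp - dm" by (auto simp: dp_def dm_def)
  have \<pi>0: "\<pi> m \<ge> 0" for m using q by (simp add: \<pi>_def poisson_weight_nonneg)
  have pt: "\<pi> m * \<psi> s + \<pi> m * real m * dp \<le> \<pi> m * \<psi> (s + real m * a) + \<pi> m * real m * dm" for m
  proof -
    have "\<pi> m * (\<psi> s + real m * (dp - dm)) \<le> \<pi> m * \<psi> (s + real m * a)"
      using convex_on_extrapolate[OF conv s a, of m] dpm(3) by (intro mult_left_mono \<pi>0) simp
    then show ?thesis by (simp add: algebra_simps)
  qed
  have "(\<lambda>m. \<pi> m * \<psi> s + \<pi> m * real m * dp) sums (1 * \<psi> s + q * dp)"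
    unfolding \<pi>_def
    by (intro sums_add sums_mult2 sums_poisson_weight)
       (use sums_poisson_weight_mean[of q] in \<open>auto dest: sums_mult2[where c=dp]\<close>)
  then have "ennreal (\<psi> s + q * dp) = (\<Sum>m. ennreal (\<pi> m * \<psi> s + \<pi> m * real m * dp))"
    by (intro suminf_ennreal_eq[symmetric]) (use nn s dpm \<pi>0 in auto)
  also have "\<dots> \<le> (\<Sum>m. ennreal (\<pi> m * \<psi> (s + real m * a)) + ennreal (\<pi> m * real m * dm))"
    by (intro suminf_le summableI) (use pt dpm \<pi>0 nn s a in \<open>auto simp flip: ennreal_plus\<close>)
  also have "\<dots> = (\<Sum>m. ennreal (\<pi> m * \<psi> (s + real m * a))) + (\<Sum>m. ennreal (\<pi> m * real m * dm))"
    by (rule suminf_add[symmetric]) auto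
  also have "(\<Sum>m. ennreal (\<pi> m * real m * dm)) = ennreal (q * dm)"
    using sums_mult2[OF sums_poisson_weight_mean[of q], of dm]
    by (intro suminf_ennreal_eq) (use dpm \<pi>0 in \<open>auto simp: \<pi>_def\<close>)
  also have "ennreal (\<psi> s + q * dp) = ennreal ((1 - q) * \<psi> s + q * \<psi> (s + a)) + ennreal (q * dm)"
  proof -
    have dd: "dp = \<psi> (s + a) - \<psi> s + dm" using dpm(3) by simp
    have "\<psi> s + q * dp = ((1 - q) * \<psi> s + q * \<psi> (s + a)) + q * dm"
      unfolding dd by (simp add: algebra_simps)
    moreover have "0 \<le> (1 - q) * \<psi> s + q * \<psi> (s + a)" using nn s a q by simp
    ultimately show ?thesis using q dpm by (subst ennreal_plus[symmetric]) auto
  qed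
  finally show ?thesis
    by (simp add: \<pi>_def ennreal_add_left_cancel_le add.commute[of _ "ennreal (q * dm)"])
qed

lemma poisson_tail_bernoulli_mix_le:
  assumes conv: "convex_on {0..} \<psi>" and nn: "\<And>x. x \<ge> 0 \<Longrightarrow> \<psi> x \<ge> 0"
    and l: "l \<ge> 0" and q: "0 \<le> q" "q \<le> 1" and a: "a \<ge> 0" and x: "x \<ge> 0"
  shows "ennreal (1 - q) * poisson_tail \<psi> l x + ennreal q * poisson_tail (\<lambda>y. \<psi> (y + a)) l x
     \<le> (\<Sum>t. \<Sum>m. ennreal (poisson_rate_weight l t * poisson_weight q m * \<psi> (real t * x + real m * a)))"
proof -
  define w where "w = poisson_rate_weight l"
  have termwise: "ennreal (1 - q) * ennreal (w t * \<psi> (real t * x)) + ennreal q * ennreal (w t * \<psi> (real t * x + a))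
      \<le> (\<Sum>m. ennreal (w t * poisson_weight q m * \<psi> (real t * x + real m * a)))" for t
  proof -
    have w: "w t \<ge> 0" and tx: "real t * x \<ge> 0"
      using l x by (simp_all add: w_def poisson_rate_weight_nonneg)
    have "ennreal (1 - q) * ennreal (w t * \<psi> (real t * x)) + ennreal q * ennreal (w t * \<psi> (real t * x + a))
        = ennreal (w t) * ennreal ((1 - q) * \<psi> (real t * x) + q * \<psi> (real t * x + a))"
      using q w tx a nn by (intro ennreal_scaled_convex_combination) auto
    also have "\<dots> \<le> ennreal (w t) * (\<Sum>m. ennreal (poisson_weight q m * \<psi> (real t * x + real m * a)))"
      by (intro mult_left_mono convex_bernoulli_le_poisson[OF conv nn tx a q]) auto
    also have "\<dots> = (\<Sum>m. ennreal (w t * poisson_weight q m * \<psi> (real t * x + real m * a)))"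
      using w by (simp add: ennreal_mult' mult.assoc)
    finally show ?thesis .
  qed
  have "ennreal (1 - q) * poisson_tail \<psi> l x + ennreal q * poisson_tail (\<lambda>y. \<psi> (y + a)) l x
      = (\<Sum>t. ennreal (1 - q) * ennreal (w t * \<psi> (real t * x)) + ennreal q * ennreal (w t * \<psi> (real t * x + a)))"
    unfolding poisson_tail_def w_def by (subst suminf_add[symmetric]) auto
  also have "\<dots> \<le> (\<Sum>t. \<Sum>m. ennreal (w t * poisson_weight q m * \<psi> (real t * x + real m * a)))"
    by (intro suminf_le summableI termwise)
  finally show ?thesis unfolding w_def .
qed

lemma suminf_antidiagonal_poisson_tail:
  assumes l: "l \<ge> 0" and q: "q \<ge> 0" and nn: "\<And>x. x \<ge> 0 \<Longrightarrow> \<psi> x \<ge> 0" and x: "x \<ge> 0"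
  shows "(\<Sum>t. \<Sum>m. ennreal (poisson_rate_weight l t * poisson_weight q m * (real t / real (t + m))
                            * \<psi> (real (t + m) * x)))
    = poisson_tail \<psi> (l + q) x"
proof -
  have "(\<Sum>t\<le>s. ennreal (poisson_rate_weight l t * poisson_weight q (s - t) * (real t / real (t + (s - t)))
                         * \<psi> (real (t + (s - t)) * x)))
      = ennreal (poisson_rate_weight (l + q) s * \<psi> (real s * x))" for s
  proof -
    have "(\<Sum>t\<le>s. ennreal (poisson_rate_weight l t * poisson_weight q (s - t) * (real t / real (t + (s - t)))
                           * \<psi> (real (t + (s - t)) * x)))
        = ennreal (\<Sum>t\<le>s. poisson_rate_weight l t * poisson_weight q (s - t) * real t / real s * \<psi> (real s * x))"
      using l q nn x
      by (subst sum_ennreal) (auto intro!: sum.cong simp: poisson_rate_weight_nonneg poisson_weight_nonneg)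
    also have "\<dots> = ennreal (poisson_rate_weight (l + q) s * \<psi> (real s * x))"
      by (subst poisson_rate_weight_superposition[symmetric]) (simp add: sum_distrib_right)
    finally show ?thesis .
  qed
  then show ?thesis
    unfolding poisson_tail_def suminf_ennreal_antidiagonal by simp
qed

lemma suminf_antidiagonal_superposition_weight:
  assumes l: "l \<ge> 0" and q: "q \<ge> 0" and nn: "\<And>x. x \<ge> 0 \<Longrightarrow> \<psi> x \<ge> 0" and a: "a \<ge> 0"
  shows "(\<Sum>t. \<Sum>m. ennreal (poisson_rate_weight l t * poisson_weight q m * (real m / real (t + m))
                            * \<psi> (real (t + m) * a)))
    = (\<Sum>s. ennreal (superposition_weight l q s * \<psi> (real s * a)))"
proof -
  have "(\<Sum>t\<le>s. ennreal (poisson_rate_weight l t * poisson_weight q (s - t) * (real (s - t) / real (t + (s - t)))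
                         * \<psi> (real (t + (s - t)) * a)))
      = ennreal (superposition_weight l q s * \<psi> (real s * a))" for s
    using l q nn a unfolding superposition_weight_def sum_distrib_right
    by (subst sum_ennreal) (auto intro!: sum.cong simp: poisson_rate_weight_nonneg poisson_weight_nonneg)
  then show ?thesis
    unfolding suminf_ennreal_antidiagonal by simp
qed

lemma poisson_double_sum_split_le:
  assumes conv: "convex_on {0..} \<psi>" and nn: "\<And>x. x \<ge> 0 \<Longrightarrow> \<psi> x \<ge> 0"
    and l: "l \<ge> 0" and q: "0 \<le> q" and a: "a \<ge> 0" and x: "x \<ge> 0"
  shows "(\<Sum>t. \<Sum>m. ennreal (poisson_rate_weight l t * poisson_weight q m * \<psi> (real t * x + real m * a)))
     \<le> poisson_tail \<psi> (l + q) x + (\<Sum>s. ennreal (superposition_weight l q s * \<psi> (real s * a)))"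
proof -
  define w where "w t m = poisson_rate_weight l t * poisson_weight q m" for t m
  have split: "ennreal (w t m * \<psi> (real t * x + real m * a))
      \<le> ennreal (w t m * (real t / real (t + m)) * \<psi> (real (t + m) * x))
        + ennreal (w t m * (real m / real (t + m)) * \<psi> (real (t + m) * a))" for t m
  proof (cases "t = 0")
    case False
    have w: "w t m \<ge> 0" using l q by (simp add: w_def poisson_rate_weight_nonneg poisson_weight_nonneg)
    have "w t m * \<psi> (real t * x + real m * a)
        \<le> w t m * (real t / real (t + m) * \<psi> (real (t + m) * x) + real m / real (t + m) * \<psi> (real (t + m) * a))"
      using False by (intro mult_left_mono[OF convex_on_split_nat[OF conv x a] w]) simp
    then show ?thesis
      using w nn x a by (simp add: algebra_simps flip: ennreal_plus)
  qed (simp add: w_def poisson_rate_weight_def)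
  have "(\<Sum>t. \<Sum>m. ennreal (w t m * \<psi> (real t * x + real m * a)))
      \<le> (\<Sum>t. \<Sum>m. ennreal (w t m * (real t / real (t + m)) * \<psi> (real (t + m) * x))
                  + ennreal (w t m * (real m / real (t + m)) * \<psi> (real (t + m) * a)))"
    by (intro suminf_le summableI split)
  also have "\<dots> = (\<Sum>t. \<Sum>m. ennreal (w t m * (real t / real (t + m)) * \<psi> (real (t + m) * x)))
      + (\<Sum>t. \<Sum>m. ennreal (w t m * (real m / real (t + m)) * \<psi> (real (t + m) * a)))"
    by (simp add: suminf_add)
  also have "\<dots> = poisson_tail \<psi> (l + q) x + (\<Sum>s. ennreal (superposition_weight l q s * \<psi> (real s * a)))"
    using suminf_antidiagonal_poisson_tail[where \<psi>=\<psi>, OF l q nn x]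
      suminf_antidiagonal_superposition_weight[where \<psi>=\<psi>, OF l q nn a]
    by (simp add: w_def)
  finally show ?thesis by (simp add: w_def)
qed

lemma poisson_superposition_eq:
  assumes nn: "\<And>x. x \<ge> 0 \<Longrightarrow> \<psi> x \<ge> 0" and l: "l \<ge> 0" and q: "q \<ge> 0" and a: "a \<ge> 0"
  shows "ennreal (exp (-l)) * (\<Sum>m. ennreal (poisson_weight q m * \<psi> (real m * a)))
      + ennreal l * (\<Sum>s. ennreal (superposition_weight l q s * \<psi> (real s * a)))
    = ennreal (exp (-(l + q)) * \<psi> 0) + ennreal q * poisson_tail \<psi> (l + q) a"
proof -
  have termwise: "ennreal (exp (-l)) * ennreal (poisson_weight q s * \<psi> (real s * a))
        + ennreal l * ennreal (superposition_weight l q s * \<psi> (real s * a))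
      = ennreal (if s = 0 then exp (-(l + q)) * \<psi> 0 else 0)
        + ennreal q * ennreal (poisson_rate_weight (l + q) s * \<psi> (real s * a))" for s
  proof -
    have \<psi>0: "\<psi> (real s * a) \<ge> 0" using nn a by simp
    have "ennreal (exp (-l)) * ennreal (poisson_weight q s * \<psi> (real s * a))
          + ennreal l * ennreal (superposition_weight l q s * \<psi> (real s * a))
        = ennreal ((exp (-l) * poisson_weight q s + l * superposition_weight l q s) * \<psi> (real s * a))"
      using \<psi>0 superposition_weight_nonneg[OF l q, of s] poisson_weight_nonneg[OF q, of s] l
      by (simp add: ennreal_mult[symmetric] ennreal_plus[symmetric] algebra_simps del: ennreal_plus)
    then show ?thesis
      unfolding poisson_rate_weight_superposition' using \<psi>0 q poisson_rate_weight_nonneg[of "l + q" s] l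
      by (cases "s = 0") (simp_all add: ennreal_mult[symmetric] algebra_simps)
  qed
  have "ennreal (exp (-l)) * (\<Sum>m. ennreal (poisson_weight q m * \<psi> (real m * a)))
      + ennreal l * (\<Sum>s. ennreal (superposition_weight l q s * \<psi> (real s * a)))
    = (\<Sum>s. ennreal (exp (-l)) * ennreal (poisson_weight q s * \<psi> (real s * a))
          + ennreal l * ennreal (superposition_weight l q s * \<psi> (real s * a)))"
    by (subst suminf_add[symmetric]) auto
  also have "\<dots> = (\<Sum>s. ennreal (if s = 0 then exp (-(l + q)) * \<psi> 0 else 0)
      + ennreal q * ennreal (poisson_rate_weight (l + q) s * \<psi> (real s * a)))"
    by (rule suminf_cong) (rule termwise)
  also have "\<dots> = (\<Sum>s. ennreal (if s = 0 then exp (-(l + q)) * \<psi> 0 else 0)) + ennreal q * poisson_tail \<psi> (l + q) a"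
    unfolding poisson_tail_def by (subst suminf_add[symmetric]) auto
  also have "(\<Sum>s. ennreal (if s = 0 then exp (-(l + q)) * \<psi> 0 else 0)) = ennreal (exp (-(l + q)) * \<psi> 0)"
    by (subst suminf_finite[of "{0}"]) auto
  finally show ?thesis .
qed

lemma poisson_tail_bound_step:
  fixes \<psi> :: "real \<Rightarrow> real" and p \<alpha> :: "'i \<Rightarrow> real" and J :: "'i set"
  assumes conv: "convex_on {0..} \<psi>" and nn: "\<And>x. x \<ge> 0 \<Longrightarrow> \<psi> x \<ge> 0"
    and l: "l \<ge> 0" and q: "0 \<le> q" "q \<le> 1" and a: "a \<ge> 0" and J: "finite J"
    and p: "\<And>j. j \<in> J \<Longrightarrow> p j \<ge> 0" and \<alpha>: "\<And>j. j \<in> J \<Longrightarrow> \<alpha> j \<ge> 0"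
    and lsum: "(\<Sum>j\<in>J. p j) = l"
  shows "ennreal (1 - q) * (ennreal (exp (-l) * \<psi> 0) + (\<Sum>j\<in>J. ennreal (p j) * poisson_tail \<psi> l (\<alpha> j)))
       + ennreal q * (ennreal (exp (-l) * \<psi> a)
           + (\<Sum>j\<in>J. ennreal (p j) * poisson_tail (\<lambda>y. \<psi> (y + a)) l (\<alpha> j)))
     \<le> ennreal (exp (-(l + q)) * \<psi> 0) + (\<Sum>j\<in>J. ennreal (p j) * poisson_tail \<psi> (l + q) (\<alpha> j))
       + ennreal q * poisson_tail \<psi> (l + q) a"
proof -
  define R where "R = (\<Sum>s. ennreal (superposition_weight l q s * \<psi> (real s * a)))"
  have atom: "ennreal (1 - q) * ennreal (exp (-l) * \<psi> 0) + ennreal q * ennreal (exp (-l) * \<psi> a)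
      \<le> ennreal (exp (-l)) * (\<Sum>m. ennreal (poisson_weight q m * \<psi> (real m * a)))"
    using ennreal_scaled_convex_combination[OF q, of "exp (-l)" "\<psi> 0" "\<psi> a"] nn a
      convex_bernoulli_le_poisson[OF conv nn order.refl a q]
    by (simp add: mult_left_mono)
  have tails: "ennreal (1 - q) * poisson_tail \<psi> l (\<alpha> j) + ennreal q * poisson_tail (\<lambda>y. \<psi> (y + a)) l (\<alpha> j)
      \<le> poisson_tail \<psi> (l + q) (\<alpha> j) + R" if "j \<in> J" for j
    unfolding R_def
    using poisson_tail_bernoulli_mix_le[OF conv nn l q a \<alpha>[OF that]]
      poisson_double_sum_split_le[OF conv nn l q(1) a \<alpha>[OF that]]
    by (rule order.trans)
  have "ennreal (1 - q) * (ennreal (exp (-l) * \<psi> 0) + (\<Sum>j\<in>J. ennreal (p j) * poisson_tail \<psi> l (\<alpha> j)))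
       + ennreal q * (ennreal (exp (-l) * \<psi> a)
           + (\<Sum>j\<in>J. ennreal (p j) * poisson_tail (\<lambda>y. \<psi> (y + a)) l (\<alpha> j)))
     = (ennreal (1 - q) * ennreal (exp (-l) * \<psi> 0) + ennreal q * ennreal (exp (-l) * \<psi> a))
       + (\<Sum>j\<in>J. ennreal (p j) * (ennreal (1 - q) * poisson_tail \<psi> l (\<alpha> j)
                                 + ennreal q * poisson_tail (\<lambda>y. \<psi> (y + a)) l (\<alpha> j)))"
    by (simp add: distrib_left sum_distrib_left sum.distrib mult_ac add_ac)
  also have "\<dots> \<le> ennreal (exp (-l)) * (\<Sum>m. ennreal (poisson_weight q m * \<psi> (real m * a)))
       + (\<Sum>j\<in>J. ennreal (p j) * (poisson_tail \<psi> (l + q) (\<alpha> j) + R))"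
    using tails by (intro add_mono[OF atom] sum_mono mult_left_mono) auto
  also have "(\<Sum>j\<in>J. ennreal (p j) * (poisson_tail \<psi> (l + q) (\<alpha> j) + R))
      = (\<Sum>j\<in>J. ennreal (p j) * poisson_tail \<psi> (l + q) (\<alpha> j)) + ennreal l * R"
  proof -
    have "(\<Sum>j\<in>J. ennreal (p j)) = ennreal l" using p lsum by (subst sum_ennreal) auto
    then show ?thesis by (simp add: distrib_left sum.distrib sum_distrib_right[symmetric])
  qed
  also have "ennreal (exp (-l)) * (\<Sum>m. ennreal (poisson_weight q m * \<psi> (real m * a)))
      + ((\<Sum>j\<in>J. ennreal (p j) * poisson_tail \<psi> (l + q) (\<alpha> j)) + ennreal l * R)
    = ennreal (exp (-(l + q)) * \<psi> 0) + ennreal q * poisson_tail \<psi> (l + q) a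
      + (\<Sum>j\<in>J. ennreal (p j) * poisson_tail \<psi> (l + q) (\<alpha> j))"
    using poisson_superposition_eq[where \<psi>=\<psi>, OF nn l q(1) a] unfolding R_def by (simp add: add_ac)
  finally show ?thesis by (simp add: add_ac)
qed

section \<open>Expectations of Bernoulli and Poisson variables\<close>

lemma (in prob_space) indep_var_nn_integral_mult:
  assumes ind: "indep_var S X T Y" and f: "f \<in> borel_measurable S" and g: "g \<in> borel_measurable T"
    and f0: "\<And>\<omega>. \<omega> \<in> space M \<Longrightarrow> 0 \<le> f (X \<omega>)" and g0: "\<And>\<omega>. \<omega> \<in> space M \<Longrightarrow> 0 \<le> g (Y \<omega>)"
  shows "(\<integral>\<^sup>+\<omega>. ennreal (f (X \<omega>) * g (Y \<omega>)) \<partial>M)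
    = (\<integral>\<^sup>+\<omega>. ennreal (f (X \<omega>)) \<partial>M) * (\<integral>\<^sup>+\<omega>. ennreal (g (Y \<omega>)) \<partial>M)"
proof -
  define f' where "f' x = ennreal (f x)" for x
  define g' where "g' x = ennreal (g x)" for x
  have "f' \<in> borel_measurable S" "g' \<in> borel_measurable T"
    unfolding f'_def g'_def using f g by measurable
  then have "indep_var borel (f' \<circ> X) borel (g' \<circ> Y)"
    by (rule indep_var_compose[OF ind])
  moreover have "(\<lambda>_. borel) = case_bool borel (borel :: ennreal measure)"
    by (rule ext) (simp split: bool.split)
  ultimately have "indep_vars (\<lambda>_. borel) (case_bool (f' \<circ> X) (g' \<circ> Y)) UNIV"
    unfolding indep_var_def by simp
  then have "(\<integral>\<^sup>+\<omega>. (\<Prod>i\<in>UNIV. case_bool (f' \<circ> X) (g' \<circ> Y) i \<omega>) \<partial>M)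
      = (\<Prod>i\<in>UNIV. \<integral>\<^sup>+\<omega>. case_bool (f' \<circ> X) (g' \<circ> Y) i \<omega> \<partial>M)"
    by (intro indep_vars_nn_integral) auto
  then have "(\<integral>\<^sup>+\<omega>. f' (X \<omega>) * g' (Y \<omega>) \<partial>M) = (\<integral>\<^sup>+\<omega>. f' (X \<omega>) \<partial>M) * (\<integral>\<^sup>+\<omega>. g' (Y \<omega>) \<partial>M)"
    by (simp add: UNIV_bool mult.commute comp_def)
  moreover have "(\<integral>\<^sup>+\<omega>. f' (X \<omega>) * g' (Y \<omega>) \<partial>M) = (\<integral>\<^sup>+\<omega>. ennreal (f (X \<omega>) * g (Y \<omega>)) \<partial>M)"
    by (intro nn_integral_cong) (simp add: f'_def g'_def f0 ennreal_mult')
  ultimately show ?thesis by (simp add: f'_def g'_def)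
qed

lemma (in prob_space) nn_integral_bernoulli:
  assumes Z: "Z \<in> borel_measurable M" and Z01: "\<And>x. x \<in> space M \<Longrightarrow> Z x \<in> {0, 1}"
  shows "(\<integral>\<^sup>+x. ennreal (Z x) \<partial>M) = ennreal (prob {x \<in> space M. Z x = 1})"
    and "(\<integral>\<^sup>+x. ennreal (1 - Z x) \<partial>M) = ennreal (1 - prob {x \<in> space M. Z x = 1})"
proof -
  have ev: "{x \<in> space M. Z x = 1} \<in> events" using Z by measurable
  have "(\<integral>\<^sup>+x. ennreal (Z x) \<partial>M) = (\<integral>\<^sup>+x. indicator {x \<in> space M. Z x = 1} x \<partial>M)"
    by (intro nn_integral_cong) (auto simp: indicator_def dest!: Z01)
  with ev show "(\<integral>\<^sup>+x. ennreal (Z x) \<partial>M) = ennreal (prob {x \<in> space M. Z x = 1})"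
    by (simp add: emeasure_eq_measure)
  have "(\<integral>\<^sup>+x. ennreal (1 - Z x) \<partial>M) = (\<integral>\<^sup>+x. indicator (space M - {x \<in> space M. Z x = 1}) x \<partial>M)"
    by (intro nn_integral_cong) (auto simp: indicator_def dest!: Z01)
  with ev show "(\<integral>\<^sup>+x. ennreal (1 - Z x) \<partial>M) = ennreal (1 - prob {x \<in> space M. Z x = 1})"
    by (simp add: emeasure_eq_measure prob_compl)
qed

lemma (in prob_space) integral_bernoulli:
  assumes Z: "Z \<in> borel_measurable M" and Z01: "\<And>x. x \<in> space M \<Longrightarrow> Z x \<in> {0, 1}"
  shows "integrable M Z" and "integral\<^sup>L M Z = prob {x \<in> space M. Z x = 1}"
proof -
  have ev: "{x \<in> space M. Z x = 1} \<in> events" using Z by measurable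
  have eq: "\<And>x. x \<in> space M \<Longrightarrow> Z x = indicator {x \<in> space M. Z x = 1} x"
    by (auto simp: indicator_def dest!: Z01)
  have "integrable M (indicator {x \<in> space M. Z x = 1} :: 'a \<Rightarrow> real)"
    using ev by (intro integrable_real_indicator) (auto simp: emeasure_eq_measure)
  then show "integrable M Z"
    by (rule Bochner_Integration.integrable_cong[THEN iffD2, OF refl eq, rotated])
  have "integral\<^sup>L M Z = integral\<^sup>L M (indicator {x \<in> space M. Z x = 1} :: 'a \<Rightarrow> real)"
    by (rule Bochner_Integration.integral_cong[OF refl eq])
  with ev show "integral\<^sup>L M Z = prob {x \<in> space M. Z x = 1}" by simp
qed

lemma (in prob_space) integral_affine_bernoulli:
  assumes fin: "finite I" and Zm: "\<And>i. i \<in> I \<Longrightarrow> Z i \<in> borel_measurable M"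
    and Z01: "\<And>i x. i \<in> I \<Longrightarrow> x \<in> space M \<Longrightarrow> Z i x \<in> {0, 1}"
  shows "integrable M (\<lambda>x. c + (\<Sum>i\<in>I. d i * Z i x))"
    and "(\<integral>x. c + (\<Sum>i\<in>I. d i * Z i x) \<partial>M) = c + (\<Sum>i\<in>I. d i * prob {x \<in> space M. Z i x = 1})"
proof -
  have iZ: "\<And>i. i \<in> I \<Longrightarrow> integrable M (Z i)" using integral_bernoulli(1)[OF Zm Z01] by blast
  have isum: "integrable M (\<lambda>x. \<Sum>i\<in>I. d i * Z i x)" using iZ by auto
  then show "integrable M (\<lambda>x. c + (\<Sum>i\<in>I. d i * Z i x))" by auto
  have "(\<integral>x. c + (\<Sum>i\<in>I. d i * Z i x) \<partial>M) = c + (\<Sum>i\<in>I. \<integral>x. d i * Z i x \<partial>M)"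
    using isum iZ by (simp add: prob_space Bochner_Integration.integral_sum)
  also have "\<dots> = c + (\<Sum>i\<in>I. d i * prob {x \<in> space M. Z i x = 1})"
    using integral_bernoulli(2)[OF Zm Z01] by simp
  finally show "(\<integral>x. c + (\<Sum>i\<in>I. d i * Z i x) \<partial>M) = c + (\<Sum>i\<in>I. d i * prob {x \<in> space M. Z i x = 1})" .
qed

lemma nn_integral_poisson:
  assumes r: "0 < r" and P_rv: "P \<in> measurable M (count_space UNIV)"
    and P_poisson: "distr M (count_space UNIV) P = measure_pmf (poisson_pmf r)"
    and h: "\<And>m. h m \<ge> 0"
  shows "(\<integral>\<^sup>+x. ennreal (h (P x)) \<partial>M) = (\<Sum>m. ennreal (poisson_weight r m * h m))"
proof -
  have "(\<integral>\<^sup>+x. ennreal (h (P x)) \<partial>M) = (\<integral>\<^sup>+m. ennreal (h m) \<partial>distr M (count_space UNIV) P)"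
    by (rule nn_integral_distr[symmetric]) (use P_rv in auto)
  also have "\<dots> = (\<integral>\<^sup>+m. ennreal (pmf (poisson_pmf r) m) * ennreal (h m) \<partial>count_space UNIV)"
    unfolding P_poisson nn_integral_measure_pmf ..
  also have "\<dots> = (\<Sum>m. ennreal (poisson_weight r m * h m))"
    using r by (simp add: nn_integral_count_space_nat poisson_weight_def mult.commute, intro suminf_cong)
       (simp add: ennreal_mult''[symmetric] h)
  finally show ?thesis .
qed

lemma (in prob_space) integral_poisson_times_bernoulli:
  assumes r: "0 < r" and P_rv: "P \<in> measurable M (count_space UNIV)"
    and P_poisson: "distr M (count_space UNIV) P = measure_pmf (poisson_pmf r)"
    and indep: "indep_var borel (\<lambda>x. real (P x)) borel Z"
    and Z: "Z \<in> borel_measurable M" and Z01: "\<And>x. x \<in> space M \<Longrightarrow> Z x \<in> {0, 1}"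
  shows "integrable M (\<lambda>x. real (P x) * Z x)"
    and "(\<integral>x. real (P x) * Z x \<partial>M) = r * prob {x \<in> space M. Z x = 1}"
proof -
  have Z0: "\<And>x. x \<in> space M \<Longrightarrow> Z x \<ge> 0" using Z01 by fastforce
  have meas: "(\<lambda>x. real (P x) * Z x) \<in> borel_measurable M"
    using P_rv Z by measurable
  have "(\<Sum>m. ennreal (poisson_weight r m * real m)) = ennreal r"
    by (rule suminf_ennreal_eq[OF _ sums_poisson_weight_mean]) (use r in \<open>simp add: poisson_weight_nonneg\<close>)
  then have "(\<integral>\<^sup>+x. ennreal (real (P x) * Z x) \<partial>M) = ennreal (r * prob {x \<in> space M. Z x = 1})"
    using indep_var_nn_integral_mult[OF indep, where f="\<lambda>t. t" and g="\<lambda>t. t"] Z0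
      nn_integral_poisson[OF r P_rv P_poisson, of real] nn_integral_bernoulli(1)[OF Z Z01] r
    by (simp add: ennreal_mult')
  with meas Z0 show "integrable M (\<lambda>x. real (P x) * Z x)"
    by (intro integrableI_nonneg) auto
  with meas Z0 r show "(\<integral>x. real (P x) * Z x \<partial>M) = r * prob {x \<in> space M. Z x = 1}"
    using integral_eq_nn_integral[OF meas] \<open>(\<integral>\<^sup>+x. _ \<partial>M) = _\<close> by simp
qed

lemma (in prob_space) indep_var_of_indep_set_component:
  fixes X :: "'i \<Rightarrow> 'a \<Rightarrow> real" and g :: "'c \<Rightarrow> real"
  assumes indep: "indep_set (sigma_sets (space M) {P -` A \<inter> space M | A. A \<in> sets (count_space UNIV)})
      (sigma_sets (space M) {(\<lambda>x. \<lambda>i\<in>I. X i x) -` A \<inter> space M | A. A \<in> sets (Pi\<^sub>M I (\<lambda>_. borel :: real measure))})"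
    and P_rv: "P \<in> measurable M (count_space UNIV)"
    and X_rv: "\<And>i. i \<in> I \<Longrightarrow> X i \<in> borel_measurable M" and i: "i \<in> I"
  shows "indep_var borel (\<lambda>x. g (P x)) borel (X i)"
proof -
  define V where "V = (\<lambda>x. \<lambda>i\<in>I. X i x)"
  have V_m: "V \<in> measurable M (Pi\<^sub>M I (\<lambda>_. borel))" unfolding V_def
    by (rule measurable_restrict) (rule X_rv)
  have sub1: "{(\<lambda>x. g (P x)) -` A \<inter> space M | A. A \<in> sets borel}
      \<subseteq> {P -` A \<inter> space M | A. A \<in> sets (count_space UNIV)}"
  proof clarify
    fix A :: "real set"
    have "(\<lambda>x. g (P x)) -` A \<inter> space M = P -` (g -` A) \<inter> space M" by auto
    then show "\<exists>A'. (\<lambda>x. g (P x)) -` A \<inter> space M = P -` A' \<inter> space M \<and> A' \<in> sets (count_space UNIV)"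
      by auto
  qed
  have sub2: "{X i -` A \<inter> space M | A. A \<in> sets borel}
      \<subseteq> {V -` A \<inter> space M | A. A \<in> sets (Pi\<^sub>M I (\<lambda>_. borel :: real measure))}"
  proof clarify
    fix A :: "real set" assume A: "A \<in> sets borel"
    define C where "C = (\<lambda>v. v i) -` A \<inter> space (Pi\<^sub>M I (\<lambda>_. borel :: real measure))"
    have "C \<in> sets (Pi\<^sub>M I (\<lambda>_. borel :: real measure))"
      unfolding C_def by (rule measurable_sets[OF measurable_component_singleton[OF i] A])
    moreover have "X i -` A \<inter> space M = V -` C \<inter> space M"
      using measurable_space[OF V_m] i by (auto simp: C_def V_def)
    ultimately show "\<exists>A'. X i -` A \<inter> space M = V -` A' \<inter> space M \<and> A' \<in> sets (Pi\<^sub>M I (\<lambda>_. borel :: real measure))"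
      by blast
  qed
  have "indep_set (sigma_sets (space M) {(\<lambda>x. g (P x)) -` A \<inter> space M | A. A \<in> sets borel})
                  (sigma_sets (space M) {X i -` A \<inter> space M | A. A \<in> sets borel})"
    using indep unfolding indep_set_def V_def[symmetric]
    apply (rule indep_sets_mono_sets)
    subgoal for b
      by (cases b) (simp_all only: bool.case sigma_sets_subseteq[OF sub1] sigma_sets_subseteq[OF sub2])
    done
  moreover have "(\<lambda>x. g (P x)) \<in> borel_measurable M" by (rule measurable_compose[OF P_rv]) simp
  ultimately show ?thesis unfolding indep_var_eq using X_rv[OF i] by simp
qed

section \<open>Sums of Bernoulli variables\<close>

lemma exclusive_indicators_cases:
  assumes "\<And>i. i \<in> I \<Longrightarrow> c i \<in> {0, 1}"
    and "\<And>i j. i \<in> I \<Longrightarrow> j \<in> I \<Longrightarrow> i \<noteq> j \<Longrightarrow> c i = 1 \<Longrightarrow> c j = 0"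
  obtains "\<forall>i\<in>I. c i = 0" | i where "i \<in> I" "c i = 1" "\<forall>j\<in>I. j \<noteq> i \<longrightarrow> c j = 0"
  using assms by blast

lemma sum_mult_single_indicator:
  fixes c g :: "'i \<Rightarrow> real"
  assumes "finite I" "i \<in> I" "c i = 1" "\<forall>j\<in>I. j \<noteq> i \<longrightarrow> c j = 0"
  shows "(\<Sum>j\<in>I. g j * c j) = g i"
  using assms by (subst sum.remove[of I i]) (auto intro!: sum.neutral)

lemma apply_sum_exclusive_indicators:
  fixes f :: "real \<Rightarrow> real" and c \<alpha> :: "'i \<Rightarrow> real"
  assumes "finite I" and "\<And>i. i \<in> I \<Longrightarrow> c i \<in> {0, 1}"
    and "\<And>i j. i \<in> I \<Longrightarrow> j \<in> I \<Longrightarrow> i \<noteq> j \<Longrightarrow> c i = 1 \<Longrightarrow> c j = 0"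
  shows "f (\<Sum>i\<in>I. \<alpha> i * c i) = f 0 + (\<Sum>i\<in>I. (f (\<alpha> i) - f 0) * c i)"
proof (rule exclusive_indicators_cases[OF assms(2,3)])
  fix i assume i: "i \<in> I" "c i = 1" "\<forall>j\<in>I. j \<noteq> i \<longrightarrow> c j = 0"
  show ?thesis
    using sum_mult_single_indicator[OF assms(1) i, of \<alpha>]
      sum_mult_single_indicator[OF assms(1) i, of "\<lambda>i. f (\<alpha> i) - f 0"] by simp
next
  assume "\<forall>i\<in>I. c i = 0"
  then have "(\<Sum>i\<in>I. \<alpha> i * c i) = 0" "(\<Sum>i\<in>I. (f (\<alpha> i) - f 0) * c i) = 0"
    by (auto intro!: sum.neutral)
  then show ?thesis by simp
qed

lemma (in prob_space) indep_var_insert_weighted_sum: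
  fixes X :: "'i \<Rightarrow> 'a \<Rightarrow> real"
  assumes "finite F" "K \<notin> F" and indep: "indep_vars (\<lambda>_. borel) X (insert K F)"
  shows "indep_var borel (X K) borel (\<lambda>y. \<Sum>i\<in>F. \<alpha> i * X i y)"
proof -
  have "indep_vars (\<lambda>_. borel) (\<lambda>i y. (if i = K then 1 else \<alpha> i) * X i y) (insert K F)"
    by (rule indep_vars_compose2[OF indep, where Y="\<lambda>i x. (if i = K then 1 else \<alpha> i) * x"]) auto
  from indep_vars_sum[OF assms(1,2) this]
  have "indep_var borel (X K) borel (\<lambda>y. \<Sum>i\<in>F. (if i = K then 1 else \<alpha> i) * X i y)" by simp
  moreover have "(\<lambda>y. \<Sum>i\<in>F. (if i = K then 1 else \<alpha> i) * X i y) = (\<lambda>y. \<Sum>i\<in>F. \<alpha> i * X i y)"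
    using assms(2) by (intro ext sum.cong) auto
  ultimately show ?thesis by simp
qed

lemma (in prob_space) nn_integral_add_indep_bernoulli:
  fixes \<psi> :: "real \<Rightarrow> real"
  assumes indep: "indep_var borel Z borel S"
    and Z: "Z \<in> borel_measurable M" and Z01: "\<And>y. y \<in> space M \<Longrightarrow> Z y \<in> {0, 1}"
    and S: "S \<in> borel_measurable M" and S0: "\<And>y. y \<in> space M \<Longrightarrow> S y \<ge> 0"
    and \<psi>: "\<psi> \<in> borel_measurable borel" and nn: "\<And>x. x \<ge> 0 \<Longrightarrow> \<psi> x \<ge> 0" and a: "a \<ge> 0"
  shows "(\<integral>\<^sup>+y. ennreal (\<psi> (S y + a * Z y)) \<partial>M)
    = ennreal (1 - prob {y \<in> space M. Z y = 1}) * (\<integral>\<^sup>+y. ennreal (\<psi> (S y)) \<partial>M)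
      + ennreal (prob {y \<in> space M. Z y = 1}) * (\<integral>\<^sup>+y. ennreal (\<psi> (S y + a)) \<partial>M)"
proof -
  have Z_bounds: "0 \<le> Z y" "Z y \<le> 1" if "y \<in> space M" for y
    using Z01[OF that] by auto
  have "(\<integral>\<^sup>+y. ennreal (\<psi> (S y + a * Z y)) \<partial>M)
      = (\<integral>\<^sup>+y. ennreal ((1 - Z y) * \<psi> (S y)) + ennreal (Z y * \<psi> (S y + a)) \<partial>M)"
  proof (intro nn_integral_cong)
    fix y assume "y \<in> space M"
    then consider "Z y = 0" | "Z y = 1" using Z01 by fastforce
    then show "ennreal (\<psi> (S y + a * Z y)) = ennreal ((1 - Z y) * \<psi> (S y)) + ennreal (Z y * \<psi> (S y + a))"
      by cases simp_all
  qed
  also have "\<dots> = (\<integral>\<^sup>+y. ennreal ((1 - Z y) * \<psi> (S y)) \<partial>M) + (\<integral>\<^sup>+y. ennreal (Z y * \<psi> (S y + a)) \<partial>M)"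
    using Z S \<psi> by (intro nn_integral_add) auto
  also have "\<dots> = (\<integral>\<^sup>+y. ennreal (1 - Z y) \<partial>M) * (\<integral>\<^sup>+y. ennreal (\<psi> (S y)) \<partial>M)
      + (\<integral>\<^sup>+y. ennreal (Z y) \<partial>M) * (\<integral>\<^sup>+y. ennreal (\<psi> (S y + a)) \<partial>M)"
    using indep_var_nn_integral_mult[OF indep, where f="\<lambda>b. 1 - b" and g=\<psi>]
      indep_var_nn_integral_mult[OF indep, where f="\<lambda>b. b" and g="\<lambda>s. \<psi> (s + a)"]
      \<psi> S0 a nn Z_bounds by auto
  finally show ?thesis
    using nn_integral_bernoulli[OF Z Z01] by simp
qed

lemma (in prob_space) bernoulli_sum_le_poisson_mixture:
  fixes B :: "'i \<Rightarrow> 'a \<Rightarrow> real" and \<alpha> :: "'i \<Rightarrow> real" and \<psi> :: "real \<Rightarrow> real"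
  assumes "finite I"
    and "\<And>i. i \<in> I \<Longrightarrow> B i \<in> borel_measurable M"
    and "\<And>i y. i \<in> I \<Longrightarrow> y \<in> space M \<Longrightarrow> B i y \<in> {0, 1}"
    and "indep_vars (\<lambda>_. borel) B I"
    and "\<And>i. i \<in> I \<Longrightarrow> \<alpha> i \<ge> 0"
    and "convex_on UNIV \<psi>" and "\<And>x. x \<ge> 0 \<Longrightarrow> \<psi> x \<ge> 0"
  shows "(\<integral>\<^sup>+y. ennreal (\<psi> (\<Sum>i\<in>I. \<alpha> i * B i y)) \<partial>M)
    \<le> ennreal (exp (- (\<Sum>j\<in>I. prob {y \<in> space M. B j y = 1})) * \<psi> 0)
      + (\<Sum>j\<in>I. ennreal (prob {y \<in> space M. B j y = 1})
                 * poisson_tail \<psi> (\<Sum>j\<in>I. prob {y \<in> space M. B j y = 1}) (\<alpha> j))"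
  using assms
proof (induction I arbitrary: \<psi> rule: finite_induct)
  case empty
  then show ?case by (simp add: emeasure_space_1)
next
  case (insert K F)
  define q where "q j = prob {y \<in> space M. B j y = 1}" for j
  define l where "l = (\<Sum>j\<in>F. q j)"
  define S where "S y = (\<Sum>i\<in>F. \<alpha> i * B i y)" for y
  have a0: "\<alpha> K \<ge> 0" using insert.prems by simp
  have S_meas: "S \<in> borel_measurable M"
    unfolding S_def using insert.prems by measurable
  have S0: "S y \<ge> 0" if "y \<in> space M" for y
    unfolding S_def
  proof (rule sum_nonneg)
    fix i assume "i \<in> F"
    then have "B i y \<in> {0, 1}" "\<alpha> i \<ge> 0" using insert.prems that by auto
    then show "0 \<le> \<alpha> i * B i y" by auto
  qed
  have IH: "(\<integral>\<^sup>+y. ennreal (\<theta> (S y)) \<partial>M)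
      \<le> ennreal (exp (- l) * \<theta> 0) + (\<Sum>j\<in>F. ennreal (q j) * poisson_tail \<theta> l (\<alpha> j))"
    if "convex_on UNIV \<theta>" "\<And>x. x \<ge> 0 \<Longrightarrow> \<theta> x \<ge> 0" for \<theta>
    unfolding S_def l_def q_def
  proof (rule insert.IH)
    show "indep_vars (\<lambda>_. borel) B F"
      using insert.prems(3) by (rule indep_vars_subset) auto
  qed (use insert.prems that in auto)
  have "(\<integral>\<^sup>+y. ennreal (\<psi> (\<Sum>i\<in>insert K F. \<alpha> i * B i y)) \<partial>M)
      = ennreal (1 - q K) * (\<integral>\<^sup>+y. ennreal (\<psi> (S y)) \<partial>M)
        + ennreal (q K) * (\<integral>\<^sup>+y. ennreal (\<psi> (S y + \<alpha> K)) \<partial>M)"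
    using nn_integral_add_indep_bernoulli[OF indep_var_insert_weighted_sum[OF insert.hyps insert.prems(3)]
        _ _ S_meas[unfolded S_def] _ convex_on_borel_measurable[OF insert.prems(5)] insert.prems(6) a0]
      insert.prems(1,2) S0 insert.hyps
    by (simp add: S_def q_def add.commute mult.commute)
  also have "\<dots> \<le> ennreal (1 - q K)
          * (ennreal (exp (- l) * \<psi> 0) + (\<Sum>j\<in>F. ennreal (q j) * poisson_tail \<psi> l (\<alpha> j)))
      + ennreal (q K) * (ennreal (exp (- l) * \<psi> (\<alpha> K))
          + (\<Sum>j\<in>F. ennreal (q j) * poisson_tail (\<lambda>x. \<psi> (x + \<alpha> K)) l (\<alpha> j)))"
    using IH[OF insert.prems(5,6)] IH[of "\<lambda>x. \<psi> (x + \<alpha> K)"] convex_on_shift[OF insert.prems(5)]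
      insert.prems(6) a0
    by (intro add_mono mult_left_mono) simp_all
  also have "\<dots> \<le> ennreal (exp (- (l + q K)) * \<psi> 0) + (\<Sum>j\<in>F. ennreal (q j) * poisson_tail \<psi> (l + q K) (\<alpha> j))
      + ennreal (q K) * poisson_tail \<psi> (l + q K) (\<alpha> K)"
  proof (rule poisson_tail_bound_step)
    show "convex_on {0..} \<psi>"
      using insert.prems(5) by (rule convex_on_subset) simp_all
  qed (use insert.prems(4,6) insert.hyps(1) a0 in \<open>auto simp: l_def q_def sum_nonneg\<close>)
  also have "\<dots> = ennreal (exp (- (\<Sum>j\<in>insert K F. q j)) * \<psi> 0)
      + (\<Sum>j\<in>insert K F. ennreal (q j) * poisson_tail \<psi> (\<Sum>j\<in>insert K F. q j) (\<alpha> j))"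
    using insert.hyps by (simp add: l_def add_ac)
  finally show ?case unfolding q_def .
qed

lemma (in prob_space) poisson_times_exclusive_nn_integral_ge:
  fixes P :: "'a \<Rightarrow> nat" and chi :: "'i \<Rightarrow> 'a \<Rightarrow> real" and \<psi> :: "real \<Rightarrow> real"
  assumes fin: "finite I" and r: "0 < r"
    and P_rv: "P \<in> measurable M (count_space UNIV)"
    and P_poisson: "distr M (count_space UNIV) P = measure_pmf (poisson_pmf r)"
    and P_indep: "\<And>i g. i \<in> I \<Longrightarrow> indep_var borel (\<lambda>x. g (P x)) borel (chi i)"
    and chi_rv: "\<And>i. i \<in> I \<Longrightarrow> chi i \<in> borel_measurable M"
    and chi_bern: "\<And>i x. i \<in> I \<Longrightarrow> x \<in> space M \<Longrightarrow> chi i x \<in> {0, 1}"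
    and excl: "\<And>i j x. i \<in> I \<Longrightarrow> j \<in> I \<Longrightarrow> i \<noteq> j \<Longrightarrow> x \<in> space M \<Longrightarrow> chi i x = 1 \<Longrightarrow> chi j x = 0"
    and \<alpha>: "\<And>i. i \<in> I \<Longrightarrow> \<alpha> i \<ge> 0"
    and \<psi>_meas: "\<psi> \<in> borel_measurable borel" and nn: "\<And>x. x \<ge> 0 \<Longrightarrow> \<psi> x \<ge> 0"
  shows "(\<Sum>i\<in>I. ennreal (prob {x \<in> space M. chi i x = 1})
                 * (\<Sum>m. ennreal (poisson_weight r m * \<psi> (real m * \<alpha> i))))
    \<le> (\<integral>\<^sup>+x. ennreal (\<psi> (real (P x) * (\<Sum>i\<in>I. \<alpha> i * chi i x))) \<partial>M)"
proof -
  have chi0: "chi i x \<ge> 0" if "i \<in> I" "x \<in> space M" for i x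
    using chi_bern[OF that] by auto
  have term_eq: "(\<integral>\<^sup>+x. ennreal (\<psi> (real (P x) * \<alpha> i) * chi i x) \<partial>M)
      = ennreal (prob {x \<in> space M. chi i x = 1}) * (\<Sum>m. ennreal (poisson_weight r m * \<psi> (real m * \<alpha> i)))"
    if i: "i \<in> I" for i
  proof -
    have "(\<integral>\<^sup>+x. ennreal (\<psi> (real (P x) * \<alpha> i) * chi i x) \<partial>M)
        = (\<integral>\<^sup>+x. ennreal (\<psi> (real (P x) * \<alpha> i)) \<partial>M) * (\<integral>\<^sup>+x. ennreal (chi i x) \<partial>M)"
      using indep_var_nn_integral_mult[OF P_indep[OF i, of "\<lambda>m. \<psi> (real m * \<alpha> i)"],
          where f="\<lambda>t. t" and g="\<lambda>t. t"] nn \<alpha>[OF i] chi0[OF i] by simp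
    also have "\<dots> = (\<Sum>m. ennreal (poisson_weight r m * \<psi> (real m * \<alpha> i)))
        * ennreal (prob {x \<in> space M. chi i x = 1})"
      using nn_integral_poisson[OF r P_rv P_poisson, of "\<lambda>m. \<psi> (real m * \<alpha> i)"]
        nn_integral_bernoulli(1)[OF chi_rv[OF i] chi_bern[OF i]] nn \<alpha>[OF i] by simp
    finally show ?thesis by (simp add: mult.commute)
  qed
  have pointwise: "(\<Sum>i\<in>I. ennreal (\<psi> (real (P x) * \<alpha> i) * chi i x))
      \<le> ennreal (\<psi> (real (P x) * (\<Sum>i\<in>I. \<alpha> i * chi i x)))" if x: "x \<in> space M" for x
  proof (rule exclusive_indicators_cases[of I "\<lambda>i. chi i x"])
    fix i assume i: "i \<in> I" "chi i x = 1" "\<forall>j\<in>I. j \<noteq> i \<longrightarrow> chi j x = 0"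
    have "(\<Sum>j\<in>I. ennreal (\<psi> (real (P x) * \<alpha> j) * chi j x)) = ennreal (\<psi> (real (P x) * \<alpha> i) * chi i x)"
      using i by (subst sum.remove[OF fin \<open>i \<in> I\<close>]) (auto intro!: sum.neutral)
    moreover have "(\<Sum>j\<in>I. \<alpha> j * chi j x) = \<alpha> i"
      using sum_mult_single_indicator[OF fin i] .
    ultimately show ?thesis using i by simp
  next
    assume "\<forall>i\<in>I. chi i x = 0"
    then show ?thesis by simp
  qed (use chi_bern[OF _ x] excl[OF _ _ _ x] in blast)+
  have "(\<Sum>i\<in>I. ennreal (prob {x \<in> space M. chi i x = 1})
                 * (\<Sum>m. ennreal (poisson_weight r m * \<psi> (real m * \<alpha> i))))
      = (\<integral>\<^sup>+x. (\<Sum>i\<in>I. ennreal (\<psi> (real (P x) * \<alpha> i) * chi i x)) \<partial>M)"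
    using P_rv chi_rv \<psi>_meas by (simp add: term_eq nn_integral_sum)
  also have "\<dots> \<le> (\<integral>\<^sup>+x. ennreal (\<psi> (real (P x) * (\<Sum>i\<in>I. \<alpha> i * chi i x))) \<partial>M)"
    by (rule nn_integral_mono) (rule pointwise)
  finally show ?thesis .
qed

lemma cx_le_exclusive_bernoulli_sum:
  fixes chi :: "'i \<Rightarrow> 'a \<Rightarrow> real" and B :: "'i \<Rightarrow> 'b \<Rightarrow> real"
  assumes M: "prob_space M" and N: "prob_space N" and fin: "finite I"
    and chi_rv: "\<And>i. i \<in> I \<Longrightarrow> chi i \<in> borel_measurable M"
    and chi_bern: "\<And>i x. i \<in> I \<Longrightarrow> x \<in> space M \<Longrightarrow> chi i x \<in> {0, 1}"
    and excl: "\<And>i j x. i \<in> I \<Longrightarrow> j \<in> I \<Longrightarrow> i \<noteq> j \<Longrightarrow> x \<in> space M \<Longrightarrow> chi i x = 1 \<Longrightarrow> chi j x = 0"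
    and B_rv: "\<And>i. i \<in> I \<Longrightarrow> B i \<in> borel_measurable N"
    and B_bern: "\<And>i y. i \<in> I \<Longrightarrow> y \<in> space N \<Longrightarrow> B i y \<in> {0, 1}"
    and B_prob: "\<And>i. i \<in> I \<Longrightarrow> measure N {y \<in> space N. B i y = 1} = measure M {x \<in> space M. chi i x = 1}"
    and \<alpha>: "\<And>i. i \<in> I \<Longrightarrow> \<alpha> i \<ge> 0"
  shows "cx_le M (\<lambda>x. \<Sum>i\<in>I. \<alpha> i * chi i x) N (\<lambda>y. \<Sum>i\<in>I. \<alpha> i * B i y)"
  unfolding cx_le_def
proof (intro allI impI)
  interpret M: prob_space M by (rule M)
  interpret N: prob_space N by (rule N)
  fix \<phi> :: "real \<Rightarrow> real"
  assume conv: "convex_on UNIV \<phi>" and "integrable M (\<lambda>x. \<phi> (\<Sum>i\<in>I. \<alpha> i * chi i x))"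
    and \<phi>Y_int: "integrable N (\<lambda>y. \<phi> (\<Sum>i\<in>I. \<alpha> i * B i y))"
  have "(\<integral>x. \<phi> (\<Sum>i\<in>I. \<alpha> i * chi i x) \<partial>M) = (\<integral>x. \<phi> 0 + (\<Sum>i\<in>I. (\<phi> (\<alpha> i) - \<phi> 0) * chi i x) \<partial>M)"
  proof (rule Bochner_Integration.integral_cong[OF refl])
    fix x assume x: "x \<in> space M"
    show "\<phi> (\<Sum>i\<in>I. \<alpha> i * chi i x) = \<phi> 0 + (\<Sum>i\<in>I. (\<phi> (\<alpha> i) - \<phi> 0) * chi i x)"
      using chi_bern[OF _ x] excl[OF _ _ _ x] by (intro apply_sum_exclusive_indicators[OF fin]) blast+
  qed
  also have "\<dots> = \<phi> 0 + (\<Sum>i\<in>I. (\<phi> (\<alpha> i) - \<phi> 0) * measure M {x \<in> space M. chi i x = 1})"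
    by (rule M.integral_affine_bernoulli(2)[OF fin chi_rv chi_bern])
  also have "\<dots> = (\<integral>y. \<phi> 0 + (\<Sum>i\<in>I. (\<phi> (\<alpha> i) - \<phi> 0) * B i y) \<partial>N)"
    using B_prob by (simp add: N.integral_affine_bernoulli(2)[OF fin B_rv B_bern])
  also have "\<dots> \<le> (\<integral>y. \<phi> (\<Sum>i\<in>I. \<alpha> i * B i y) \<partial>N)"
  proof (rule integral_mono[OF N.integral_affine_bernoulli(1)[OF fin B_rv B_bern] \<phi>Y_int])
    fix y assume "y \<in> space N"
    then show "\<phi> 0 + (\<Sum>i\<in>I. (\<phi> (\<alpha> i) - \<phi> 0) * B i y) \<le> \<phi> (\<Sum>i\<in>I. \<alpha> i * B i y)"
      using B_bern \<alpha>
      by (intro convex_on_superadditive_indicator_sum[OF convex_on_subset[OF conv] fin]) auto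
  qed
  finally show "(\<integral>x. \<phi> (\<Sum>i\<in>I. \<alpha> i * chi i x) \<partial>M) \<le> (\<integral>y. \<phi> (\<Sum>i\<in>I. \<alpha> i * B i y) \<partial>N)" .
qed

lemma cx_le_of_nonneg_convex:
  fixes X :: "'a \<Rightarrow> real" and Y :: "'b \<Rightarrow> real"
  assumes M: "prob_space M" and N: "prob_space N"
    and X_int: "integrable M X" and Y_int: "integrable N Y"
    and X0: "\<And>x. x \<in> space M \<Longrightarrow> X x \<ge> 0" and Y0: "\<And>y. y \<in> space N \<Longrightarrow> Y y \<ge> 0"
    and mean: "(\<integral>x. X x \<partial>M) = (\<integral>y. Y y \<partial>N)"
    and le: "\<And>\<psi>. convex_on UNIV \<psi> \<Longrightarrow> (\<And>x. x \<ge> 0 \<Longrightarrow> \<psi> x \<ge> 0) \<Longrightarrow>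
      (\<integral>\<^sup>+x. ennreal (\<psi> (X x)) \<partial>M) \<le> (\<integral>\<^sup>+y. ennreal (\<psi> (Y y)) \<partial>N)"
  shows "cx_le M X N Y"
  unfolding cx_le_def
proof (intro allI impI)
  interpret M: prob_space M by (rule M)
  interpret N: prob_space N by (rule N)
  fix \<phi> :: "real \<Rightarrow> real"
  assume conv: "convex_on UNIV \<phi>" and \<phi>X_int: "integrable M (\<lambda>x. \<phi> (X x))"
    and \<phi>Y_int: "integrable N (\<lambda>y. \<phi> (Y y))"
  define \<psi> where "\<psi> x = \<phi> x - (\<phi> 0 + (\<phi> 0 - \<phi> (-1)) * x)" for x
  have \<psi>_nn: "\<psi> x \<ge> 0" if "x \<ge> 0" for x
    using convex_on_secant_le[OF conv that] by (simp add: \<psi>_def)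
  have \<psi>X_int: "integrable M (\<lambda>x. \<psi> (X x))" and \<psi>Y_int: "integrable N (\<lambda>y. \<psi> (Y y))"
    using \<phi>X_int X_int \<phi>Y_int Y_int by (simp_all add: \<psi>_def)
  have "ennreal (\<integral>x. \<psi> (X x) \<partial>M) = (\<integral>\<^sup>+x. ennreal (\<psi> (X x)) \<partial>M)"
    by (rule nn_integral_eq_integral[OF \<psi>X_int, symmetric]) (use X0 \<psi>_nn in auto)
  also have "\<dots> \<le> (\<integral>\<^sup>+y. ennreal (\<psi> (Y y)) \<partial>N)"
    unfolding \<psi>_def by (rule le[OF convex_on_minus_affine[OF conv]]) (use \<psi>_nn in \<open>simp add: \<psi>_def\<close>)
  also have "\<dots> = ennreal (\<integral>y. \<psi> (Y y) \<partial>N)"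
    by (rule nn_integral_eq_integral[OF \<psi>Y_int]) (use Y0 \<psi>_nn in auto)
  finally have "(\<integral>x. \<psi> (X x) \<partial>M) \<le> (\<integral>y. \<psi> (Y y) \<partial>N)"
    using integral_nonneg_AE[of "\<lambda>y. \<psi> (Y y)" N] Y0 \<psi>_nn by simp
  then show "(\<integral>x. \<phi> (X x) \<partial>M) \<le> (\<integral>y. \<phi> (Y y) \<partial>N)"
    using \<phi>X_int X_int \<phi>Y_int Y_int mean by (simp add: \<psi>_def M.prob_space N.prob_space)
qed

lemma cx_le_bernoulli_sum_poisson_times:
  fixes chi :: "'i \<Rightarrow> 'a \<Rightarrow> real" and B :: "'i \<Rightarrow> 'b \<Rightarrow> real" and P :: "'a \<Rightarrow> nat"
  assumes M: "prob_space M" and N: "prob_space N" and fin: "finite I"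
    and chi_rv: "\<And>i. i \<in> I \<Longrightarrow> chi i \<in> borel_measurable M"
    and chi_bern: "\<And>i x. i \<in> I \<Longrightarrow> x \<in> space M \<Longrightarrow> chi i x \<in> {0, 1}"
    and excl: "\<And>i j x. i \<in> I \<Longrightarrow> j \<in> I \<Longrightarrow> i \<noteq> j \<Longrightarrow> x \<in> space M \<Longrightarrow> chi i x = 1 \<Longrightarrow> chi j x = 0"
    and chi_sum: "(\<Sum>i\<in>I. measure M {x \<in> space M. chi i x = 1}) = 1"
    and B_rv: "\<And>i. i \<in> I \<Longrightarrow> B i \<in> borel_measurable N"
    and B_bern: "\<And>i y. i \<in> I \<Longrightarrow> y \<in> space N \<Longrightarrow> B i y \<in> {0, 1}"
    and B_indep: "prob_space.indep_vars N (\<lambda>_. borel) B I"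
    and B_prob: "\<And>i. i \<in> I \<Longrightarrow> measure N {y \<in> space N. B i y = 1} = measure M {x \<in> space M. chi i x = 1}"
    and P_rv: "P \<in> measurable M (count_space UNIV)"
    and P_poisson: "distr M (count_space UNIV) P = measure_pmf (poisson_pmf 1)"
    and P_indep: "\<And>i g. i \<in> I \<Longrightarrow> prob_space.indep_var M borel (\<lambda>x. g (P x)) borel (chi i)"
    and \<alpha>: "\<And>i. i \<in> I \<Longrightarrow> \<alpha> i \<ge> 0"
  shows "cx_le N (\<lambda>y. \<Sum>i\<in>I. \<alpha> i * B i y) M (\<lambda>x. real (P x) * (\<Sum>i\<in>I. \<alpha> i * chi i x))"
proof -
  interpret M: prob_space M by (rule M)
  interpret N: prob_space N by (rule N)
  define p where "p i = measure M {x \<in> space M. chi i x = 1}" for i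
  have P_chi: "integrable M (\<lambda>x. real (P x) * chi i x)" "(\<integral>x. real (P x) * chi i x \<partial>M) = p i"
    if "i \<in> I" for i
    using M.integral_poisson_times_bernoulli[where Z="chi i", OF _ P_rv P_poisson P_indep[OF that]
        chi_rv[OF that] chi_bern[OF that]]
    by (simp_all add: p_def)
  have R_eq: "(\<lambda>x. real (P x) * (\<Sum>i\<in>I. \<alpha> i * chi i x)) = (\<lambda>x. \<Sum>i\<in>I. \<alpha> i * (real (P x) * chi i x))"
    by (simp add: sum_distrib_left mult_ac)
  show ?thesis
  proof (rule cx_le_of_nonneg_convex[OF N M])
    show "integrable N (\<lambda>y. \<Sum>i\<in>I. \<alpha> i * B i y)"
      using N.integral_affine_bernoulli(1)[where Z=B and c=0 and d=\<alpha>, OF fin B_rv B_bern] by simp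
    show "integrable M (\<lambda>x. real (P x) * (\<Sum>i\<in>I. \<alpha> i * chi i x))"
      unfolding R_eq using P_chi by auto
    show "(\<integral>y. (\<Sum>i\<in>I. \<alpha> i * B i y) \<partial>N) = (\<integral>x. real (P x) * (\<Sum>i\<in>I. \<alpha> i * chi i x) \<partial>M)"
      using N.integral_affine_bernoulli(2)[where Z=B and c=0 and d=\<alpha>, OF fin B_rv B_bern] B_prob P_chi
      unfolding R_eq by (simp add: p_def)
    show "(\<Sum>i\<in>I. \<alpha> i * B i y) \<ge> 0" if "y \<in> space N" for y
      using B_bern[OF _ that] \<alpha> by (force intro: sum_nonneg)
    show "real (P x) * (\<Sum>i\<in>I. \<alpha> i * chi i x) \<ge> 0" if "x \<in> space M" for x
      using chi_bern[OF _ that] \<alpha> by (force intro!: mult_nonneg_nonneg sum_nonneg)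
  next
    fix \<psi> :: "real \<Rightarrow> real"
    assume \<psi>_conv: "convex_on UNIV \<psi>" and \<psi>_nn: "\<And>x. x \<ge> 0 \<Longrightarrow> \<psi> x \<ge> 0"
    have "(\<integral>\<^sup>+y. ennreal (\<psi> (\<Sum>i\<in>I. \<alpha> i * B i y)) \<partial>N)
        \<le> ennreal (exp (- 1) * \<psi> 0) + (\<Sum>i\<in>I. ennreal (p i) * poisson_tail \<psi> 1 (\<alpha> i))"
      using N.bernoulli_sum_le_poisson_mixture[OF fin B_rv B_bern B_indep \<alpha> \<psi>_conv \<psi>_nn] B_prob chi_sum
      by (simp add: p_def cong: sum.cong)
    also have "\<dots> = (\<Sum>i\<in>I. ennreal (p i) * (\<Sum>m. ennreal (poisson_weight 1 m * \<psi> (real m * \<alpha> i))))"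
    proof -
      have "(\<Sum>i\<in>I. ennreal (p i)) = 1" using chi_sum by (simp add: p_def)
      then show ?thesis
        using \<psi>_nn \<alpha> by (simp add: suminf_poisson_weight_eq distrib_left sum.distrib flip: sum_distrib_right)
    qed
    also have "\<dots> \<le> (\<integral>\<^sup>+x. ennreal (\<psi> (real (P x) * (\<Sum>i\<in>I. \<alpha> i * chi i x))) \<partial>M)"
      using M.poisson_times_exclusive_nn_integral_ge[OF fin _ P_rv P_poisson P_indep chi_rv chi_bern excl \<alpha>
          convex_on_borel_measurable[OF \<psi>_conv] \<psi>_nn]
      by (simp add: p_def)
    finally show "(\<integral>\<^sup>+y. ennreal (\<psi> (\<Sum>i\<in>I. \<alpha> i * B i y)) \<partial>N)
        \<le> (\<integral>\<^sup>+x. ennreal (\<psi> (real (P x) * (\<Sum>i\<in>I. \<alpha> i * chi i x))) \<partial>M)" .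
  qed
qed

theorem lemma6:
  fixes M :: "'a measure" and N :: "'b measure"
    and n :: nat and chi :: "nat \<Rightarrow> 'a \<Rightarrow> real" and B :: "nat \<Rightarrow> 'b \<Rightarrow> real"
    and P :: "'a \<Rightarrow> nat" and \<alpha> :: "nat \<Rightarrow> real"
  assumes "prob_space M" and "prob_space N"
    and chi_rv: "\<And>i. i \<in> {1..n} \<Longrightarrow> chi i \<in> borel_measurable M"
    and chi_bern: "\<And>i x. i \<in> {1..n} \<Longrightarrow> x \<in> space M \<Longrightarrow> chi i x \<in> {0, 1}"
    and chi_sum: "(\<Sum>i=1..n. measure M {x \<in> space M. chi i x = 1}) = 1"
    and chi_excl: "\<And>i j. i \<in> {1..n} \<Longrightarrow> j \<in> {1..n} \<Longrightarrow> i \<noteq> j \<Longrightarrow>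
                  {x \<in> space M. chi i x = 1} \<inter> {x \<in> space M. chi j x = 1} = {}"
    and B_rv: "\<And>i. i \<in> {1..n} \<Longrightarrow> B i \<in> borel_measurable N"
    and B_bern: "\<And>i y. i \<in> {1..n} \<Longrightarrow> y \<in> space N \<Longrightarrow> B i y \<in> {0, 1}"
    and B_indep: "prob_space.indep_vars N (\<lambda>_. borel) B {1..n}"
    and B_prob: "\<And>i. i \<in> {1..n} \<Longrightarrow>
                   measure N {y \<in> space N. B i y = 1} = measure M {x \<in> space M. chi i x = 1}"
    and P_rv: "P \<in> measurable M (count_space UNIV)"
    and P_poisson: "distr M (count_space UNIV) P = measure_pmf (poisson_pmf 1)"
    and P_indep: "prob_space.indep_set M
                    (sigma_sets (space M) {P -` A \<inter> space M | A. A \<in> sets (count_space UNIV)})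
                    (sigma_sets (space M) {(\<lambda>x. \<lambda>i\<in>{1..n}. chi i x) -` A \<inter> space M | A.
                                         A \<in> sets (Pi\<^sub>M {1..n} (\<lambda>_. borel :: real measure))})"
    and \<alpha>_nonneg: "\<And>i. i \<in> {1..n} \<Longrightarrow> \<alpha> i \<ge> 0"
  shows "cx_le M (\<lambda>x. \<Sum>i=1..n. \<alpha> i * chi i x) N (\<lambda>y. \<Sum>i=1..n. \<alpha> i * B i y)
       \<and> cx_le N (\<lambda>y. \<Sum>i=1..n. \<alpha> i * B i y) M (\<lambda>x. real (P x) * (\<Sum>i=1..n. \<alpha> i * chi i x))"
proof -
  have excl: "chi j x = 0"
    if "i \<in> {1..n}" "j \<in> {1..n}" "i \<noteq> j" "x \<in> space M" "chi i x = 1" for i j x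
    using chi_excl[OF that(1-3)] chi_bern[OF that(2,4)] that(4,5) by blast
  have P_chi_indep: "prob_space.indep_var M borel (\<lambda>x. g (P x)) borel (chi i)" if "i \<in> {1..n}" for i g
    using prob_space.indep_var_of_indep_set_component[OF \<open>prob_space M\<close> P_indep P_rv chi_rv that] .
  show ?thesis
    using cx_le_exclusive_bernoulli_sum[where I="{1..n}" and chi=chi and B=B and \<alpha>=\<alpha>,
        OF assms(1,2) _ chi_rv chi_bern excl B_rv B_bern B_prob \<alpha>_nonneg]
      cx_le_bernoulli_sum_poisson_times[where I="{1..n}" and chi=chi and B=B and \<alpha>=\<alpha> and P=P,
        OF assms(1,2) _ chi_rv chi_bern excl chi_sum B_rv B_bern B_indep B_prob P_rv P_poisson
        P_chi_indep \<alpha>_nonneg]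
    by simp
qed

end
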